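(* Let $N\ge1$ and $(w,a,\theta)\in\widetilde{\mathcal{D}}_N$. There exists $\omega_0<0$ such that $M_{\mathrm{e}^{i\omega}}(w,a,\theta)\in\mathcal{D}_N$ for every real $\omega$ with $\omega_0\le\omega<0$.
   Context: $P_N=\{1,\dots,N\}$; vectors are functions on $P_N$, $v^{-1}[S]=\{\ell:v_\ell\in S\}$, $\mathrm{Tr}(v,\Lambda):=\sum_{\ell\in\Lambda}v_\ell$. $\mathcal{C}:=\{z:\mathrm{Re}(z)>0\text{ or }z\in i\mathbb{R}_{>0}\}$, $\mathcal{C}^\circ$ the open right half-plane. $\mathbb{D}_N:=\{(w,a,\theta)\in\mathbb{C}\times\mathbb{C}^N\times\mathbb{R}^N:a^{-1}[0]\subseteq\theta^{-1}[\mathbb{R}\smallsetminus\mathbb{Z}]\}$, $\pi(w,a,\theta):=w-\mathrm{Tr}(a,a^{-1}[-\mathcal{C}])$, $\widetilde{\mathcal{D}}_N:=\{\delta\in\mathbb{D}_N:\pi(\delta)\in\mathcal{C}\}$, $\mathcal{D}_N:=\{(w,a,\theta)\in\mathbb{D}_N:\pi(w,a,\theta)\in\mathcal{C}^\circ,\ a_\ell\notin i\mathbb{R}\smallsetminus\{0\}\ \forall\ell\}$. $M_\beta(w,a,\theta):=(\beta w,\beta a,\theta)$. *)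

theory Defs
  imports Complex_Main
begin

text \<open>Vectors on P_N = {1..N} are represented by functions on nat; only the
values on {1..N} matter in every definition below.\<close>

definition PN :: "nat \<Rightarrow> nat set" where
  "PN N = {1..N}"

definition Tr :: "(nat \<Rightarrow> complex) \<Rightarrow> nat set \<Rightarrow> complex" where
  "Tr v \<Lambda> = (\<Sum>l\<in>\<Lambda>. v l)"

definition preim :: "nat \<Rightarrow> (nat \<Rightarrow> 'b) \<Rightarrow> 'b set \<Rightarrow> nat set" where
  "preim N v S = {l \<in> PN N. v l \<in> S}"

definition Cset :: "complex set" where
  "Cset = {z. Re z > 0 \<or> (Re z = 0 \<and> Im z > 0)}"

definition Copen :: "complex set" where
  "Copen = {z. Re z > 0}"

definition DD :: "nat \<Rightarrow> (complex \<times> (nat \<Rightarrow> complex) \<times> (nat \<Rightarrow> real)) set" where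
  "DD N = {(w, a, \<theta>). preim N a {0} \<subseteq> preim N \<theta> (- \<int>)}"

definition piN :: "nat \<Rightarrow> complex \<times> (nat \<Rightarrow> complex) \<times> (nat \<Rightarrow> real) \<Rightarrow> complex" where
  "piN N \<delta> = (case \<delta> of (w, a, \<theta>) \<Rightarrow> w - Tr a (preim N a (uminus ` Cset)))"

definition DtN :: "nat \<Rightarrow> (complex \<times> (nat \<Rightarrow> complex) \<times> (nat \<Rightarrow> real)) set" where
  "DtN N = {\<delta> \<in> DD N. piN N \<delta> \<in> Cset}"

definition DN :: "nat \<Rightarrow> (complex \<times> (nat \<Rightarrow> complex) \<times> (nat \<Rightarrow> real)) set" where
  "DN N = {(w, a, \<theta>) \<in> DD N. piN N (w, a, \<theta>) \<in> Copen \<and>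
             (\<forall>l\<in>PN N. a l \<notin> {z. Re z = 0} - {0})}"

definition Mb :: "complex \<Rightarrow> complex \<times> (nat \<Rightarrow> complex) \<times> (nat \<Rightarrow> real)
                    \<Rightarrow> complex \<times> (nat \<Rightarrow> complex) \<times> (nat \<Rightarrow> real)" where
  "Mb \<beta> \<delta> = (case \<delta> of (w, a, \<theta>) \<Rightarrow> (\<beta> * w, (\<lambda>l. \<beta> * a l), \<theta>))"

end

theory Submission
  imports Defs
begin

text \<open>Rotating by \<open>e\<^sup>i\<^sup>\<omega>\<close> with \<open>\<omega> < 0\<close> small moves every nonzero number off the imaginary axis
  and keeps it on the side of \<open>Cset\<close> it started on: a point with \<open>Re z \<noteq> 0\<close> stays on its
  side by continuity, and a point \<open>i y\<close> moves to the half-plane of sign \<open>y\<close> since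
  \<open>Re (e\<^sup>i\<^sup>\<omega> i y) = - y sin \<omega>\<close>. Hence for all such \<omega> the rotation preserves the set of indices
  with \<open>a\<^sub>l \<in> -Cset\<close>, so it commutes with \<open>piN\<close>, and the rotated \<open>piN\<close> lies in the open
  half-plane.\<close>

lemma Cset_iff_Re_pos: "Re z \<noteq> 0 \<Longrightarrow> z \<in> Cset \<longleftrightarrow> Re z > 0"
  by (auto simp: Cset_def)

lemma uminus_Cset_iff_notin_Cset:
  assumes "z \<noteq> 0"
  shows "z \<in> uminus ` Cset \<longleftrightarrow> z \<notin> Cset"
proof -
  have "z \<in> uminus ` Cset \<longleftrightarrow> - z \<in> Cset"
    by (metis image_iff minus_minus)
  also have "\<dots> \<longleftrightarrow> z \<notin> Cset"
    using assms complex_eq_iff[of z 0] by (auto simp: Cset_def)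
  finally show ?thesis .
qed

lemma eventually_Re_cis_mult_sign:
  fixes z :: complex
  assumes "z \<noteq> 0"
  shows "\<forall>\<^sub>F \<omega> in at_left 0. Re (cis \<omega> * z) \<noteq> 0 \<and> (Re (cis \<omega> * z) > 0 \<longleftrightarrow> z \<in> Cset)"
proof (cases "Re z = 0")
  case False
  have "((\<lambda>\<omega>. Re (cis \<omega> * z)) \<longlongrightarrow> Re (cis 0 * z)) (at_left 0)"
    by (intro tendsto_intros)
  then have lim: "((\<lambda>\<omega>. Re (cis \<omega> * z)) \<longlongrightarrow> Re z) (at_left 0)"
    by simp
  consider "Re z > 0" | "Re z < 0"
    using False by linarith
  then show ?thesis
  proof cases
    case 1
    from order_tendstoD(1)[OF lim 1] show ?thesis
      by eventually_elim (use 1 in \<open>simp add: Cset_def\<close>)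
  next
    case 2
    from order_tendstoD(2)[OF lim 2] show ?thesis
      by eventually_elim (use 2 in \<open>simp add: Cset_def\<close>)
  qed
next
  case True
  with assms have "Im z \<noteq> 0"
    using complex_eq_iff by force
  have "\<forall>\<^sub>F \<omega> in at_left 0. - pi < \<omega> \<and> \<omega> < (0::real)"
    by (intro eventually_conj order_tendstoD(1)[OF tendsto_ident_at])
       (simp_all add: eventually_at_filter)
  then show ?thesis
  proof eventually_elim
    case (elim \<omega>)
    then have "sin \<omega> < 0"
      using sin_gt_zero[of "- \<omega>"] by simp
    then show ?case
      using True \<open>Im z \<noteq> 0\<close> by (auto simp: Cset_def mult_less_0_iff)
  qed
qed

lemma eventually_cis_mult_in_uminus_Cset_iff:
  fixes z :: complex
  assumes "z \<noteq> 0"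
  shows "\<forall>\<^sub>F \<omega> in at_left 0. cis \<omega> * z \<in> uminus ` Cset \<longleftrightarrow> z \<in> uminus ` Cset"
  using eventually_Re_cis_mult_sign[OF assms]
proof eventually_elim
  case (elim \<omega>)
  have "cis \<omega> * z \<noteq> 0"
    using assms by simp
  then show ?case
    using elim assms by (simp add: uminus_Cset_iff_notin_Cset Cset_iff_Re_pos)
qed

lemma piN_Mb:
  assumes "preim N (\<lambda>l. \<beta> * a l) (uminus ` Cset) = preim N a (uminus ` Cset)"
  shows "piN N (Mb \<beta> (w, a, \<theta>)) = \<beta> * piN N (w, a, \<theta>)"
  using assms by (simp add: Mb_def piN_def Tr_def sum_distrib_left right_diff_distrib)

lemma eventually_Mb_cis_in_DN:
  assumes "(w, a, \<theta>) \<in> DtN N"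
  shows "\<forall>\<^sub>F \<omega> in at_left 0. Mb (cis \<omega>) (w, a, \<theta>) \<in> DN N"
proof -
  define P where "P = piN N (w, a, \<theta>)"
  have DD: "(w, a, \<theta>) \<in> DD N" and "P \<in> Cset"
    using assms by (auto simp: DtN_def P_def)
  then have "P \<noteq> 0"
    by (auto simp: Cset_def)
  have "\<forall>\<^sub>F \<omega> in at_left 0. a l = 0 \<or> Re (cis \<omega> * a l) \<noteq> 0 \<and>
          (cis \<omega> * a l \<in> uminus ` Cset \<longleftrightarrow> a l \<in> uminus ` Cset)" for l
    by (cases "a l = 0")
       (auto intro: eventually_mono[OF eventually_conj[OF
          eventually_Re_cis_mult_sign eventually_cis_mult_in_uminus_Cset_iff]])
  then have "\<forall>\<^sub>F \<omega> in at_left 0. (\<forall>l\<in>PN N. a l = 0 \<or> Re (cis \<omega> * a l) \<noteq> 0 \<and>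
          (cis \<omega> * a l \<in> uminus ` Cset \<longleftrightarrow> a l \<in> uminus ` Cset)) \<and> Re (cis \<omega> * P) > 0"
    using eventually_Re_cis_mult_sign[OF \<open>P \<noteq> 0\<close>] \<open>P \<in> Cset\<close>
    by (intro eventually_conj eventually_ball_finite) (auto simp: PN_def elim: eventually_mono)
  then show ?thesis
  proof eventually_elim
    case (elim \<omega>)
    then have "preim N (\<lambda>l. cis \<omega> * a l) (uminus ` Cset) = preim N a (uminus ` Cset)"
      by (auto simp: preim_def uminus_Cset_iff_notin_Cset)
    then have "piN N (Mb (cis \<omega>) (w, a, \<theta>)) \<in> Copen"
      using elim by (simp add: piN_Mb P_def Copen_def)
    moreover have "preim N (\<lambda>l. cis \<omega> * a l) {0} = preim N a {0}"
      by (auto simp: preim_def)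
    ultimately show ?case
      using DD elim by (auto simp: DN_def DD_def Mb_def)
  qed
qed

lemma eventually_at_left_zero_interval:
  assumes "\<forall>\<^sub>F x in at_left 0. P x"
  shows "\<exists>x0::real. x0 < 0 \<and> (\<forall>x. x0 \<le> x \<and> x < 0 \<longrightarrow> P x)"
proof -
  obtain b where "b < 0" and "\<And>x. b < x \<Longrightarrow> x < 0 \<Longrightarrow> P x"
    using assms unfolding eventually_at_left_field by blast
  then show ?thesis
    by (intro exI[of _ "b / 2"]) auto
qed

theorem lemma6:
  fixes N :: nat and w :: complex and a :: "nat \<Rightarrow> complex" and \<theta> :: "nat \<Rightarrow> real"
  assumes "N \<ge> 1" and "(w, a, \<theta>) \<in> DtN N"
  shows "\<exists>\<omega>0::real. \<omega>0 < 0 \<and>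
           (\<forall>\<omega>::real. \<omega>0 \<le> \<omega> \<and> \<omega> < 0 \<longrightarrow> Mb (exp (\<i> * of_real \<omega>)) (w, a, \<theta>) \<in> DN N)"
  using eventually_at_left_zero_interval[OF eventually_Mb_cis_in_DN[OF assms(2)]]
  by (simp add: cis_conv_exp)

end
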